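(* Let $X$ be a real Banach space, $T:X\rightrightarrows X^*$ monotone and $\mu>0$. The following are equivalent: (1) for every $\varepsilon>0$ and every $z_0\in X$, the norm closure of $R(T(\cdot+z_0)+\mu J_\varepsilon)$ equals $X^*$; (2) for every $\varepsilon>0$ and every $z_0\in X$, $R(T(\cdot+z_0)+\mu J_\varepsilon)=X^*$.
   Context: A point-to-set operator $T:X\rightrightarrows X^*$ is a subset $T\subset X\times X^*$ with $T(x)=\{x^*:(x,x^* )\in T\}$; it is monotone if $\langle x-y,x^*-y^*\rangle\ge0$ for all $(x,x^* ),(y,y^* )\in T$. For $\varepsilon\ge0$, $J_\varepsilon(x)=\{x^*\in X^*:\ \tfrac12\|x\|^2+\tfrac12\|x^*\|^2\le\langle x,x^*\rangle+\varepsilon\}$. For $z_0\in X$, $T(\cdot+z_0)+\mu J_\varepsilon$ denotes the operator $x\mapsto\{a^*+\mu b^*: a^*\in T(x+z_0),\ b^*\in J_\varepsilon(x)\}$, and $R(S)=\bigcup_{x\in X}S(x)$ denotes the range of an operator $S$. *)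

theory Defs
  imports "HOL-Analysis.Analysis"
begin

(* The real Banach space X is a type of class banach; its dual X* is the type
  of bounded linear functionals ('a blinfun to real) with the operator norm. *)

type_synonym 'a opr = "('a \<times> ('a \<Rightarrow>\<^sub>L real)) set"

definition op_app :: "'a opr \<Rightarrow> 'a \<Rightarrow> ('a \<Rightarrow>\<^sub>L real) set" where
  "op_app T x = {xs. (x, xs) \<in> T}"

definition monotone_op :: "('a::real_normed_vector) opr \<Rightarrow> bool" where
  "monotone_op T \<longleftrightarrow>
     (\<forall>x xs y ys. (x, xs) \<in> T \<longrightarrow> (y, ys) \<in> T \<longrightarrow> 0 \<le> blinfun_apply (xs - ys) (x - y))"

definition J_eps :: "real \<Rightarrow> 'a::real_normed_vector \<Rightarrow> ('a \<Rightarrow>\<^sub>L real) set" where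
  "J_eps \<epsilon> x = {xs. (1/2) * (norm x)\<^sup>2 + (1/2) * (norm xs)\<^sup>2 \<le> blinfun_apply xs x + \<epsilon>}"

definition shift_reg :: "'a::real_normed_vector opr \<Rightarrow> 'a \<Rightarrow> real \<Rightarrow> real \<Rightarrow> 'a \<Rightarrow> ('a \<Rightarrow>\<^sub>L real) set" where
  "shift_reg T z0 \<mu> \<epsilon> x = {as + \<mu> *\<^sub>R bs | as bs. as \<in> op_app T (x + z0) \<and> bs \<in> J_eps \<epsilon> x}"

definition op_range :: "('a \<Rightarrow> 'b set) \<Rightarrow> 'b set" where
  "op_range S = (\<Union>x. S x)"

end

theory Submission
  imports Defs
begin

(* Only (1) \<Longrightarrow> (2) needs work.  Fix \<epsilon> > 0, z0 and a target functional y.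
   The range R of T(.+z0) + \<mu> J_{\<epsilon>/2} is dense, so we can write points s of R
   arbitrarily close to y as s = a + \<mu> b with a \<in> T(x+z0), b \<in> J_{\<epsilon>/2}(x).
   (i)  A priori bound: testing monotonicity against one fixed pair (u, us) \<in> T
        and using the defining inequality of J_{\<epsilon>/2} gives a quadratic
        inequality in ||x|| and ||b||, so all such x, b with s near y are bounded
        by a constant M independent of how close s is to y.
   (ii) Perturbation: moving b to b + e only enlarges the slack of the
        J-inequality by ||e|| (||x|| + ||b|| + ||e||/2).
   Choosing s so close to y that e = (y - s)/\<mu> costs at most \<epsilon>/2 of slack
   gives y = a + \<mu> (b + e) with b + e \<in> J_\<epsilon>(x), i.e. y lies in the range. *)

lemma quad_bound:
  fixes p q A B :: real
  assumes "0 \<le> p" "0 \<le> q" "0 \<le> A" "0 \<le> B" "p\<^sup>2/2 + q\<^sup>2/2 \<le> A*(p+q) + B"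
  shows "p \<le> 1 + 4*A + 2*B \<and> q \<le> 1 + 4*A + 2*B"
proof -
  define m where "m = max p q"
  have m: "0 \<le> m" "p \<le> m" "q \<le> m" using assms by (auto simp: m_def)
  have "m\<^sup>2/2 \<le> p\<^sup>2/2 + q\<^sup>2/2"
    using assms(1,2) by (auto simp: m_def max_def)
  moreover have "A * (p + q) \<le> A * (2 * m)" using m assms(3) by (intro mult_left_mono) auto
  ultimately have "m\<^sup>2/2 \<le> A * (2 * m) + B" using assms(5) by linarith
  hence quad: "m*m \<le> 4*A*m + 2*B" by (simp add: power2_eq_square algebra_simps)
  have "m \<le> 1 + 4*A + 2*B"
  proof (cases "m \<le> 1")
    case True thus ?thesis using assms by linarith
  next
    case False
    hence "2*B \<le> 2*B*m" using assms(4) by (simp add: mult_le_cancel_left1)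
    hence "m*m \<le> (4*A + 2*B)*m" using quad by (simp add: algebra_simps)
    hence "m \<le> 4*A + 2*B" using False by (simp add: mult_le_cancel_right)
    thus ?thesis by linarith
  qed
  thus ?thesis using m by linarith
qed

lemma J_eps_mono:
  assumes "\<eta> \<le> \<eta>'" "b \<in> J_eps \<eta> x"
  shows "b \<in> J_eps \<eta>' x"
  using assms by (simp add: J_eps_def)

lemma J_eps_perturb:
  fixes x :: "'a::real_normed_vector"
  assumes "b \<in> J_eps \<eta> x"
  shows "b + e \<in> J_eps (\<eta> + norm e * (norm x + norm b + norm e / 2)) x"
proof -
  have "norm (b + e) \<le> norm b + norm e" by (rule norm_triangle_ineq)
  hence "(norm (b + e))\<^sup>2 \<le> (norm b + norm e)\<^sup>2" by (simp add: power_mono)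
  hence sq: "(norm (b + e))\<^sup>2 \<le> (norm b)\<^sup>2 + 2 * norm b * norm e + (norm e)\<^sup>2"
    by (simp add: power2_eq_square algebra_simps)
  have "- blinfun_apply e x \<le> norm e * norm x"
    by (metis abs_le_D2 norm_blinfun real_norm_def)
  hence lin: "blinfun_apply b x \<le> blinfun_apply (b + e) x + norm e * norm x"
    by (simp add: blinfun.add_left)
  have "(norm x)\<^sup>2/2 + (norm b)\<^sup>2/2 \<le> blinfun_apply b x + \<eta>"
    using assms by (simp add: J_eps_def)
  moreover have "(norm e)\<^sup>2 = norm e * norm e" by (simp add: power2_eq_square)
  ultimately show ?thesis using sq lin by (simp add: J_eps_def algebra_simps)
qed

lemma monotone_pairing_bound:
  assumes mono: "monotone_op T" and "(u, us) \<in> T" and "a \<in> op_app T v"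
  shows "\<mu> * blinfun_apply b (v - u) \<le> norm (a + \<mu> *\<^sub>R b - us) * norm (v - u)"
proof -
  have "0 \<le> blinfun_apply (a - us) (v - u)"
    using assms by (simp add: monotone_op_def op_app_def)
  moreover have "blinfun_apply (a - us) (v - u)
      = blinfun_apply (a + \<mu> *\<^sub>R b - us) (v - u) - \<mu> * blinfun_apply b (v - u)"
    by (simp add: blinfun.diff_left blinfun.add_left blinfun.scaleR_left)
  moreover have "blinfun_apply (a + \<mu> *\<^sub>R b - us) (v - u) \<le> norm (a + \<mu> *\<^sub>R b - us) * norm (v - u)"
    by (metis abs_le_D1 norm_blinfun real_norm_def)
  ultimately show ?thesis by linarith
qed

lemma preimages_bounded:
  fixes T :: "('a::real_normed_vector) opr"
  assumes mono: "monotone_op T" and "T \<noteq> {}" and mu: "\<mu> > 0" and "0 \<le> \<eta>" and "0 \<le> \<rho>"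
  shows "\<exists>M\<ge>0. \<forall>x a b. a \<in> op_app T (x + z0) \<longrightarrow> b \<in> J_eps \<eta> x \<longrightarrow>
           norm (a + \<mu> *\<^sub>R b - y) \<le> \<rho> \<longrightarrow> norm x \<le> M \<and> norm b \<le> M"
proof -
  obtain u us where uT: "(u, us) \<in> T" using \<open>T \<noteq> {}\<close> by auto
  define c where "c = norm (z0 - u)"
  define K where "K = norm (y - us) + \<rho>"
  define A where "A = K/\<mu> + c"
  define B where "B = \<eta> + K*c/\<mu>"
  have c0: "0 \<le> c" and K0: "0 \<le> K" using \<open>0 \<le> \<rho>\<close> by (auto simp: c_def K_def)
  have A0: "0 \<le> A" and B0: "0 \<le> B" using c0 K0 mu \<open>0 \<le> \<eta>\<close> by (auto simp: A_def B_def)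
  have "norm x \<le> 1 + 4*A + 2*B \<and> norm b \<le> 1 + 4*A + 2*B"
    if aT: "a \<in> op_app T (x + z0)" and bJ: "b \<in> J_eps \<eta> x"
      and close: "norm (a + \<mu> *\<^sub>R b - y) \<le> \<rho>" for x a b
  proof -
    define p where "p = norm x"
    define q where "q = norm b"
    have "norm (a + \<mu> *\<^sub>R b - us) \<le> K"
      using norm_triangle_ineq[of "a + \<mu> *\<^sub>R b - y" "y - us"] close by (simp add: K_def)
    moreover have "norm (x + z0 - u) \<le> p + c"
      using norm_triangle_ineq[of x "z0 - u"] by (simp add: p_def c_def add_diff_eq)
    ultimately have "norm (a + \<mu> *\<^sub>R b - us) * norm (x + z0 - u) \<le> K * (p + c)"
      using K0 by (intro mult_mono) auto
    hence pair: "\<mu> * blinfun_apply b (x + z0 - u) \<le> K * (p + c)"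
      using monotone_pairing_bound[OF mono uT aT, of \<mu> b] by simp
    have "- blinfun_apply b (z0 - u) \<le> q * c"
      unfolding q_def c_def by (metis abs_le_D2 norm_blinfun real_norm_def)
    hence "\<mu> * (- blinfun_apply b (z0 - u)) \<le> \<mu> * (q * c)" using mu by (intro mult_left_mono) auto
    moreover have "blinfun_apply b (x + z0 - u) = blinfun_apply b x + blinfun_apply b (z0 - u)"
      by (simp add: blinfun.add_right blinfun.diff_right algebra_simps)
    ultimately have "\<mu> * blinfun_apply b x \<le> \<mu> * (K/\<mu>*p + K*c/\<mu> + c*q)"
      using pair mu by (simp add: algebra_simps)
    hence "blinfun_apply b x \<le> K/\<mu>*p + K*c/\<mu> + c*q" using mu by simp
    moreover have "K/\<mu>*p + c*q \<le> A*(p+q)"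
      using K0 c0 mu by (simp add: A_def p_def q_def algebra_simps add_mono)
    moreover have "p\<^sup>2/2 + q\<^sup>2/2 \<le> blinfun_apply b x + \<eta>"
      using bJ by (simp add: J_eps_def p_def q_def)
    ultimately have "p\<^sup>2/2 + q\<^sup>2/2 \<le> A*(p+q) + B" by (simp add: B_def)
    from quad_bound[OF _ _ A0 B0 this] show ?thesis by (simp add: p_def q_def)
  qed
  moreover have "0 \<le> 1 + 4*A + 2*B" using A0 B0 by simp
  ultimately show ?thesis by blast
qed

lemma dense_range_imp_range:
  fixes T :: "('a::real_normed_vector) opr"
  assumes mono: "monotone_op T" and mu: "\<mu> > 0" and ep: "\<epsilon> > 0"
    and dense: "closure (op_range (shift_reg T z0 \<mu> (\<epsilon>/2))) = UNIV"
  shows "y \<in> op_range (shift_reg T z0 \<mu> \<epsilon>)"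
proof -
  let ?R = "op_range (shift_reg T z0 \<mu> (\<epsilon>/2))"
  have "?R \<noteq> {}" using dense by auto
  hence "T \<noteq> {}" by (auto simp: op_range_def shift_reg_def op_app_def)
  then obtain M where M0: "0 \<le> M" and bound: "\<And>x a b. a \<in> op_app T (x + z0) \<Longrightarrow>
      b \<in> J_eps (\<epsilon>/2) x \<Longrightarrow> norm (a + \<mu> *\<^sub>R b - y) \<le> \<mu> \<Longrightarrow> norm x \<le> M \<and> norm b \<le> M"
    using preimages_bounded[OF mono _ mu, of "\<epsilon>/2" \<mu> z0 y] ep mu by auto
  define r where "r = min 1 (\<epsilon> / (2 * (2*M + 1)))"
  have r0: "0 < r" and r1: "r \<le> 1" using ep M0 by (auto simp: r_def)
  have "r * (2*M + 1) \<le> \<epsilon> / (2 * (2*M + 1)) * (2*M + 1)"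
    using M0 by (intro mult_right_mono) (auto simp: r_def)
  also have "\<dots> = \<epsilon>/2" using M0 by (simp add: field_simps)
  finally have slack: "r * (2*M + 1) \<le> \<epsilon>/2" .
  obtain s where "s \<in> ?R" and ys: "dist s y < \<mu> * r"
    using closure_approachable[of y ?R] dense r0 mu by (metis UNIV_I mult_pos_pos)
  then obtain x a b where aT: "a \<in> op_app T (x + z0)" and bJ: "b \<in> J_eps (\<epsilon>/2) x"
    and s: "s = a + \<mu> *\<^sub>R b"
    by (auto simp: op_range_def shift_reg_def)
  define e where "e = (1/\<mu>) *\<^sub>R (y - s)"
  have y: "y = a + \<mu> *\<^sub>R (b + e)" using mu by (simp add: e_def s scaleR_add_right)
  have "norm e = dist s y / \<mu>" using mu by (simp add: e_def dist_norm norm_minus_commute)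
  hence ne: "norm e < r" using ys mu by (simp add: pos_divide_less_eq mult.commute)
  have "\<mu> * r \<le> \<mu>" using r1 mu by (simp add: mult_left_le)
  hence "norm (a + \<mu> *\<^sub>R b - y) \<le> \<mu>" using ys s by (simp add: dist_norm)
  with bound[OF aT bJ] have xM: "norm x \<le> M" and bM: "norm b \<le> M" by auto
  have "norm e * (norm x + norm b + norm e / 2) \<le> r * (2*M + 1)"
    using ne r0 r1 xM bM by (intro mult_mono) auto
  hence "b + e \<in> J_eps \<epsilon> x"
    using J_eps_mono[OF _ J_eps_perturb[OF bJ, of e]] slack by simp
  with aT y show ?thesis by (auto simp: op_range_def shift_reg_def)
qed

theorem mainTheorem2:
  fixes T :: "('a::banach) opr" and \<mu> :: real
  assumes "monotone_op T" and "\<mu> > 0"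
  shows "(\<forall>\<epsilon>>0. \<forall>z0::'a. closure (op_range (shift_reg T z0 \<mu> \<epsilon>)) = UNIV)
     \<longleftrightarrow> (\<forall>\<epsilon>>0. \<forall>z0::'a. op_range (shift_reg T z0 \<mu> \<epsilon>) = UNIV)"
proof
  assume dense: "\<forall>\<epsilon>>0. \<forall>z0::'a. closure (op_range (shift_reg T z0 \<mu> \<epsilon>)) = UNIV"
  show "\<forall>\<epsilon>>0. \<forall>z0::'a. op_range (shift_reg T z0 \<mu> \<epsilon>) = UNIV"
  proof (intro allI impI)
    fix \<epsilon> :: real and z0 :: 'a
    assume "\<epsilon> > 0"
    with dense have "closure (op_range (shift_reg T z0 \<mu> (\<epsilon>/2))) = UNIV" by simp
    with dense_range_imp_range[OF assms \<open>\<epsilon> > 0\<close>]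
    show "op_range (shift_reg T z0 \<mu> \<epsilon>) = UNIV" by blast
  qed
qed simp

end
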